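(* Let $L$ be a Lipschitz language, let $\mu$ be an ultracharge on a nonempty set $I$, let $(M_i)_{i\in I}$ be $L$-structures, and let $M=\prod_\mu M_i$ be their ultramean. Then for every affine $L$-formula $\phi(x_1,\dots,x_n)$ and all $[a^1_i],\dots,[a^n_i]\in M$, $$\phi^{M}([a^{1}_{i}],\ldots,[a^{n}_{i}])=\int\phi^{M_{i}}(a^{1}_{i},\ldots,a^{n}_{i})\,d\mu .$$
   Context: A Lipschitz language $L$ consists of constant symbols, function symbols and relation symbols; each function symbol $F$ (resp. relation symbol $R$) has an arity $n\ge 1$ and a Lipschitz constant $\lambda_F\ge0$ (resp. $\lambda_R\ge 0$); $L$ contains a binary relation symbol $d$ with $\lambda_d=1$. An $L$-structure is a complete metric space $(M,d)$ of diameter at most $1$ (with $d$ interpreting the symbol $d$) together with elements $c^M$ for constants, maps $F^M:M^n\to M$ with $d(F^M(\bar a),F^M(\bar b))\le\lambda_F d(\bar a,\bar b)$ and maps $R^M:M^n\to[0,1]$ with $R^M(\bar a)-R^M(\bar b)\le\lambda_R d(\bar a,\bar b)$, where $d(\bar a,\bar b)=\sum_i d(a_i,b_i)$ on $M^n$. Affine formulas are built from the atomic formulas $1$, $d(t_1,t_2)$, $R(t_1,\dots,t_n)$ ($t_j$ terms) by $\phi+\psi$, $r\phi$ ($r\in\mathbb R$), $\sup_x\phi$, $\inf_x\phi$; their values $\phi^M(\bar a)\in\mathbb R$ are defined in the evident way (sup/inf taken over $M$); the same definition of values applies to structures whose metric is only a pseudometric or not complete. An ultracharge on $I$ is a finitely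 additive probability measure on the full power set of $I$; every bounded real function on $I$ is integrable with respect to it. The ultramean $M=\prod_\mu M_i$: on $\prod_i M_i$ put the pseudometric $d((a_i),(b_i))=\int d_i(a_i,b_i)\,d\mu$, let $[a_i]$ denote the class of $(a_i)$ modulo distance $0$, let $M$ be the set of classes with the induced metric, and set $c^M=[c^{M_i}]$, $F^M([a^1_i],\dots,[a^n_i])=[F^{M_i}(a^1_i,\dots,a^n_i)]$, $R^M([a^1_i],\dots,[a^n_i])=\int R^{M_i}(a^1_i,\dots,a^n_i)\,d\mu$ (these are well defined; $M$ need not be metrically complete). *)

theory Defs
  imports "HOL-Analysis.Analysis" "HOL-Library.Disjoint_Sets"
begin

text \<open>Constant symbols are the elements of type 'c, function symbols the elements of
type 'f, relation symbols (other than the distinguished metric symbol d, which is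
built into the syntax as the atomic formula Dist) the elements of type 'r.\<close>

record ('f, 'r) lang =
  farity :: "'f \<Rightarrow> nat"
  rarity :: "'r \<Rightarrow> nat"
  flip   :: "'f \<Rightarrow> real"
  rlip   :: "'r \<Rightarrow> real"

definition lipschitz_language :: "('f, 'r) lang \<Rightarrow> bool" where
  "lipschitz_language L \<longleftrightarrow>
     (\<forall>F. farity L F \<ge> 1 \<and> flip L F \<ge> 0) \<and> (\<forall>R. rarity L R \<ge> 1 \<and> rlip L R \<ge> 0)"

datatype ('c, 'f) trm = Var nat | Const 'c | Fn 'f "('c, 'f) trm list"

datatype ('c, 'f, 'r) afml =
    One
  | Dist "('c, 'f) trm" "('c, 'f) trm"
  | Rel 'r "('c, 'f) trm list"
  | Add "('c, 'f, 'r) afml" "('c, 'f, 'r) afml"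
  | Scale real "('c, 'f, 'r) afml"
  | FSup nat "('c, 'f, 'r) afml"
  | FInf nat "('c, 'f, 'r) afml"

fun wf_trm :: "('f, 'r) lang \<Rightarrow> ('c, 'f) trm \<Rightarrow> bool" where
  "wf_trm L (Var n) = True"
| "wf_trm L (Const c) = True"
| "wf_trm L (Fn F ts) = (length ts = farity L F \<and> (\<forall>t\<in>set ts. wf_trm L t))"

fun wf_fml :: "('f, 'r) lang \<Rightarrow> ('c, 'f, 'r) afml \<Rightarrow> bool" where
  "wf_fml L One = True"
| "wf_fml L (Dist t u) = (wf_trm L t \<and> wf_trm L u)"
| "wf_fml L (Rel R ts) = (length ts = rarity L R \<and> (\<forall>t\<in>set ts. wf_trm L t))"
| "wf_fml L (Add \<phi> \<psi>) = (wf_fml L \<phi> \<and> wf_fml L \<psi>)"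
| "wf_fml L (Scale r \<phi>) = wf_fml L \<phi>"
| "wf_fml L (FSup x \<phi>) = wf_fml L \<phi>"
| "wf_fml L (FInf x \<phi>) = wf_fml L \<phi>"

record ('a, 'c, 'f, 'r) lstruct =
  carrier :: "'a set"
  sdist   :: "'a \<Rightarrow> 'a \<Rightarrow> real"
  cinterp :: "'c \<Rightarrow> 'a"
  finterp :: "'f \<Rightarrow> 'a list \<Rightarrow> 'a"
  rinterp :: "'r \<Rightarrow> 'a list \<Rightarrow> real"

definition list_dist :: "('a \<Rightarrow> 'a \<Rightarrow> real) \<Rightarrow> 'a list \<Rightarrow> 'a list \<Rightarrow> real" where
  "list_dist d xs ys = sum_list (map2 d xs ys)"

definition is_Lstructure :: "('f, 'r) lang \<Rightarrow> ('a, 'c, 'f, 'r) lstruct \<Rightarrow> bool" where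
  "is_Lstructure L M \<longleftrightarrow>
     carrier M \<noteq> {} \<and>
     Metric_space (carrier M) (sdist M) \<and>
     Metric_space.mcomplete (carrier M) (sdist M) \<and>
     (\<forall>x\<in>carrier M. \<forall>y\<in>carrier M. sdist M x y \<le> 1) \<and>
     (\<forall>c. cinterp M c \<in> carrier M) \<and>
     (\<forall>F xs ys. length xs = farity L F \<and> length ys = farity L F \<and>
        set xs \<subseteq> carrier M \<and> set ys \<subseteq> carrier M \<longrightarrow>
        finterp M F xs \<in> carrier M \<and>
        sdist M (finterp M F xs) (finterp M F ys) \<le> flip L F * list_dist (sdist M) xs ys) \<and>
     (\<forall>R xs ys. length xs = rarity L R \<and> length ys = rarity L R \<and>
        set xs \<subseteq> carrier M \<and> set ys \<subseteq> carrier M \<longrightarrow>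
        0 \<le> rinterp M R xs \<and> rinterp M R xs \<le> 1 \<and>
        rinterp M R xs - rinterp M R ys \<le> rlip L R * list_dist (sdist M) xs ys)"

fun eval_trm :: "('a, 'c, 'f, 'r) lstruct \<Rightarrow> (nat \<Rightarrow> 'a) \<Rightarrow> ('c, 'f) trm \<Rightarrow> 'a" where
  "eval_trm M a (Var n) = a n"
| "eval_trm M a (Const c) = cinterp M c"
| "eval_trm M a (Fn F ts) = finterp M F (map (eval_trm M a) ts)"

fun eval_fml :: "('a, 'c, 'f, 'r) lstruct \<Rightarrow> (nat \<Rightarrow> 'a) \<Rightarrow> ('c, 'f, 'r) afml \<Rightarrow> real" where
  "eval_fml M a One = 1"
| "eval_fml M a (Dist t u) = sdist M (eval_trm M a t) (eval_trm M a u)"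
| "eval_fml M a (Rel R ts) = rinterp M R (map (eval_trm M a) ts)"
| "eval_fml M a (Add \<phi> \<psi>) = eval_fml M a \<phi> + eval_fml M a \<psi>"
| "eval_fml M a (Scale r \<phi>) = r * eval_fml M a \<phi>"
| "eval_fml M a (FSup x \<phi>) = (SUP b\<in>carrier M. eval_fml M (a(x := b)) \<phi>)"
| "eval_fml M a (FInf x \<phi>) = (INF b\<in>carrier M. eval_fml M (a(x := b)) \<phi>)"

definition ultracharge :: "'i set \<Rightarrow> ('i set \<Rightarrow> real) \<Rightarrow> bool" where
  "ultracharge I \<mu> \<longleftrightarrow>
     \<mu> I = 1 \<and> (\<forall>A\<subseteq>I. 0 \<le> \<mu> A) \<and>
     (\<forall>A B. A \<subseteq> I \<and> B \<subseteq> I \<and> A \<inter> B = {} \<longrightarrow> \<mu> (A \<union> B) = \<mu> A + \<mu> B)"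

definition charge_integral :: "'i set \<Rightarrow> ('i set \<Rightarrow> real) \<Rightarrow> ('i \<Rightarrow> real) \<Rightarrow> real" where
  "charge_integral I \<mu> f =
     Sup {(\<Sum>A\<in>P. \<mu> A * (INF i\<in>A. f i)) | P. finite P \<and> partition_on I P}"

definition um_pdist :: "'i set \<Rightarrow> ('i set \<Rightarrow> real) \<Rightarrow> ('i \<Rightarrow> ('a, 'c, 'f, 'r) lstruct)
    \<Rightarrow> ('i \<Rightarrow> 'a) \<Rightarrow> ('i \<Rightarrow> 'a) \<Rightarrow> real" where
  "um_pdist I \<mu> Ms a b = charge_integral I \<mu> (\<lambda>i. sdist (Ms i) (a i) (b i))"

definition um_class :: "'i set \<Rightarrow> ('i set \<Rightarrow> real) \<Rightarrow> ('i \<Rightarrow> ('a, 'c, 'f, 'r) lstruct)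
    \<Rightarrow> ('i \<Rightarrow> 'a) \<Rightarrow> ('i \<Rightarrow> 'a) set" where
  "um_class I \<mu> Ms a =
     {b \<in> (\<Pi>\<^sub>E i\<in>I. carrier (Ms i)). um_pdist I \<mu> Ms a b = 0}"

definition um_rep :: "('i \<Rightarrow> 'a) set \<Rightarrow> 'i \<Rightarrow> 'a" where
  "um_rep X = (SOME a. a \<in> X)"

definition ultramean :: "'i set \<Rightarrow> ('i set \<Rightarrow> real) \<Rightarrow> ('i \<Rightarrow> ('a, 'c, 'f, 'r) lstruct)
    \<Rightarrow> (('i \<Rightarrow> 'a) set, 'c, 'f, 'r) lstruct" where
  "ultramean I \<mu> Ms =
    \<lparr> carrier = um_class I \<mu> Ms ` (\<Pi>\<^sub>E i\<in>I. carrier (Ms i)),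
      sdist = (\<lambda>X Y. um_pdist I \<mu> Ms (um_rep X) (um_rep Y)),
      cinterp = (\<lambda>c. um_class I \<mu> Ms (\<lambda>i\<in>I. cinterp (Ms i) c)),
      finterp = (\<lambda>F Xs. um_class I \<mu> Ms
                   (\<lambda>i\<in>I. finterp (Ms i) F (map (\<lambda>X. um_rep X i) Xs))),
      rinterp = (\<lambda>R Xs. charge_integral I \<mu>
                   (\<lambda>i. rinterp (Ms i) R (map (\<lambda>X. um_rep X i) Xs))) \<rparr>"

end

(*
  It is approximated to
  within e by the Riemann sums over any finite partition on whose blocks the function
  oscillates by at most e, and the level sets of floor (f / e) and floor (g / e) form such a
  partition for two functions at once; this makes the integral linear and monotone.

  For atomic formulas, the Lipschitz
  conditions show that replacing the arguments by other representatives of their classes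
  changes the value only by a function of integral zero. For sup_x phi one inequality is monotonicity; for the other, pick in every M_i
  separately an e-maximiser b_i, so that [b_i] attains the integral of the pointwise suprema
  up to e. Infima are negated suprema of negations.
*)

theory Submission
  imports Defs
begin

section \<open>Integration against an ultracharge\<close>

definition lower_sum :: "('i set \<Rightarrow> real) \<Rightarrow> 'i set set \<Rightarrow> ('i \<Rightarrow> real) \<Rightarrow> real" where
  "lower_sum \<mu> P f = (\<Sum>A\<in>P. \<mu> A * (INF i\<in>A. f i))"

definition upper_sum :: "('i set \<Rightarrow> real) \<Rightarrow> 'i set set \<Rightarrow> ('i \<Rightarrow> real) \<Rightarrow> real" where
  "upper_sum \<mu> P f = (\<Sum>A\<in>P. \<mu> A * (SUP i\<in>A. f i))"

definition riemann_sum :: "('i set \<Rightarrow> real) \<Rightarrow> 'i set set \<Rightarrow> ('i \<Rightarrow> real) \<Rightarrow> real" where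
  "riemann_sum \<mu> P f = (\<Sum>A\<in>P. \<mu> A * f (SOME i. i \<in> A))"

lemma bounded_image_subset_bdd:
  fixes f :: "'i \<Rightarrow> real"
  assumes "bounded (f ` I)" "A \<subseteq> I"
  shows "bdd_above (f ` A)" "bdd_below (f ` A)"
  using assms by (meson bounded_imp_bdd_above bounded_imp_bdd_below bounded_subset image_mono)+

lemma real_eq_if_abs_diff_le_multiple:
  fixes x y c :: real
  assumes "\<And>\<epsilon>. \<epsilon> > 0 \<Longrightarrow> \<bar>x - y\<bar> \<le> c * \<epsilon>"
  shows "x = y"
proof (cases "c > 0")
  case True
  have "\<bar>x - y\<bar> \<le> \<epsilon>" if "\<epsilon> > 0" for \<epsilon>
    using assms[of "\<epsilon> / c"] True that by simp
  then have "\<bar>x - y\<bar> \<le> 0"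
    by (rule field_le_epsilon) simp
  then show ?thesis
    by simp
next
  case False
  then show ?thesis
    using assms[of 1] by (simp add: abs_le_iff)
qed

lemma partition_on_fibers: "partition_on I ((\<lambda>k. {i \<in> I. h i = k}) ` h ` I)"
  by (rule partition_onI) (auto simp: disjnt_def)

lemma finite_floor_image:
  fixes f :: "'i \<Rightarrow> real"
  assumes "bounded (f ` I)" "\<epsilon> > 0"
  shows "finite ((\<lambda>i. \<lfloor>f i / \<epsilon>\<rfloor>) ` I)"
proof -
  obtain B where B: "\<And>i. i \<in> I \<Longrightarrow> \<bar>f i\<bar> \<le> B"
    using assms(1) by (auto simp: bounded_real)
  have "(\<lambda>i. \<lfloor>f i / \<epsilon>\<rfloor>) ` I \<subseteq> {\<lfloor>- B / \<epsilon>\<rfloor>..\<lfloor>B / \<epsilon>\<rfloor>}"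
  proof (intro image_subsetI atLeastAtMost_iff[THEN iffD2] conjI floor_mono)
    fix i assume "i \<in> I"
    then have "- B \<le> f i" "f i \<le> B"
      using abs_le_D1[OF B] abs_le_D2[OF B] by force+
    then show "- B / \<epsilon> \<le> f i / \<epsilon>" "f i / \<epsilon> \<le> B / \<epsilon>"
      using assms(2) divide_right_mono[of "- B" "f i" \<epsilon>] divide_right_mono[of "f i" B \<epsilon>]
      by simp_all
  qed
  then show ?thesis
    by (rule finite_subset) simp
qed

lemma abs_diff_less_if_floor_eq:
  fixes x y \<epsilon> :: real
  assumes "\<lfloor>x / \<epsilon>\<rfloor> = \<lfloor>y / \<epsilon>\<rfloor>" "\<epsilon> > 0"
  shows "\<bar>x - y\<bar> < \<epsilon>"
proof -
  have "\<bar>x / \<epsilon> - y / \<epsilon>\<bar> < 1"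
    using floor_correct[of "x / \<epsilon>"] floor_correct[of "y / \<epsilon>"] unfolding assms(1) by linarith
  moreover have "\<bar>x - y\<bar> = \<epsilon> * \<bar>x / \<epsilon> - y / \<epsilon>\<bar>"
    using assms(2) by (simp add: abs_mult diff_divide_distrib[symmetric])
  ultimately show ?thesis
    using assms(2) by simp
qed

lemma bounded_const_image: "bounded ((\<lambda>i. c) ` I)"
  by (rule bounded_subset[of "{c}"]) auto

lemma bounded_SUP_image:
  fixes h :: "'i \<Rightarrow> 'b \<Rightarrow> real"
  assumes "\<And>i. i \<in> I \<Longrightarrow> C i \<noteq> {}" "\<And>i c. i \<in> I \<Longrightarrow> c \<in> C i \<Longrightarrow> \<bar>h i c\<bar> \<le> B"
  shows "bounded ((\<lambda>i. SUP c\<in>C i. h i c) ` I)"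
  unfolding bounded_real using assms by (auto intro!: exI[of _ B] cSup_abs_le)

locale ultracharge_space =
  fixes I :: "'i set" and \<mu> :: "'i set \<Rightarrow> real"
  assumes ultracharge: "ultracharge I \<mu>"
begin

lemma charge_nonneg: "A \<subseteq> I \<Longrightarrow> 0 \<le> \<mu> A"
  and charge_space: "\<mu> I = 1"
  and charge_Un: "A \<subseteq> I \<Longrightarrow> B \<subseteq> I \<Longrightarrow> A \<inter> B = {} \<Longrightarrow> \<mu> (A \<union> B) = \<mu> A + \<mu> B"
  using ultracharge unfolding ultracharge_def by auto

lemma charge_empty: "\<mu> {} = 0"
  using charge_Un[of "{}" "{}"] by simp

lemma space_nonempty: "I \<noteq> {}"
  using charge_space charge_empty by auto

lemma charge_UN:
  assumes "finite P" "disjoint_family_on g P" "\<And>A. A \<in> P \<Longrightarrow> g A \<subseteq> I"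
  shows "\<mu> (\<Union>A\<in>P. g A) = (\<Sum>A\<in>P. \<mu> (g A))"
  using assms
proof (induction P rule: finite_induct)
  case (insert A P)
  have "g A \<inter> (\<Union>B\<in>P. g B) = {}"
    using insert.prems(1) insert.hyps(2) by (fastforce simp: disjoint_family_on_def)
  then have "\<mu> (\<Union>B\<in>insert A P. g B) = \<mu> (g A) + \<mu> (\<Union>B\<in>P. g B)"
    using insert.prems(2) by (simp add: charge_Un UN_least)
  also have "\<mu> (\<Union>B\<in>P. g B) = (\<Sum>B\<in>P. \<mu> (g B))"
    using insert by (auto intro: disjoint_family_on_mono)
  finally show ?case
    using insert.hyps by simp
qed (simp add: charge_empty)

lemma charge_split_partition:
  assumes "partition_on I P" "finite P" "B \<subseteq> I"
  shows "\<mu> B = (\<Sum>A\<in>P. \<mu> (A \<inter> B))"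
proof -
  have "B = (\<Union>A\<in>P. A \<inter> B)"
    using assms partition_onD1[OF assms(1)] by auto
  moreover have "disjoint_family_on (\<lambda>A. A \<inter> B) P"
    using partition_onD2[OF assms(1)] by (auto simp: disjoint_family_on_def disjoint_def)
  moreover have "A \<inter> B \<subseteq> I" for A
    using assms(3) by blast
  ultimately show ?thesis
    using charge_UN[OF assms(2)] by metis
qed

lemma sum_charge_partition:
  assumes "partition_on I P" "finite P"
  shows "(\<Sum>A\<in>P. \<mu> A) = 1"
proof -
  have "A \<inter> I = A" if "A \<in> P" for A
    using that partition_onD1[OF assms(1)] by blast
  then show ?thesis
    using charge_split_partition[OF assms subset_refl] charge_space by simp
qed

lemma lower_sum_le_upper_sum:
  assumes f: "bounded (f ` I)"
    and P: "partition_on I P" "finite P" and Q: "partition_on I Q" "finite Q"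
  shows "lower_sum \<mu> P f \<le> upper_sum \<mu> Q f"
proof -
  have sub: "A \<subseteq> I" if "A \<in> P \<or> A \<in> Q" for A
    using that partition_onD1[OF P(1)] partition_onD1[OF Q(1)] by blast
  have "lower_sum \<mu> P f = (\<Sum>A\<in>P. \<Sum>B\<in>Q. \<mu> (B \<inter> A) * (INF i\<in>A. f i))"
    unfolding lower_sum_def using charge_split_partition[OF Q] sub
    by (simp add: sum_distrib_right)
  also have "\<dots> \<le> (\<Sum>A\<in>P. \<Sum>B\<in>Q. \<mu> (B \<inter> A) * (SUP i\<in>B. f i))"
  proof (intro sum_mono)
    fix A B assume A: "A \<in> P" and B: "B \<in> Q"
    show "\<mu> (B \<inter> A) * (INF i\<in>A. f i) \<le> \<mu> (B \<inter> A) * (SUP i\<in>B. f i)"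
    proof (cases "B \<inter> A = {}")
      case False
      then obtain j where "j \<in> A" "j \<in> B" by auto
      then have "(INF i\<in>A. f i) \<le> (SUP i\<in>B. f i)"
        using bounded_image_subset_bdd[OF f] sub A B
        by (meson cINF_lower cSUP_upper order_trans)
      then show ?thesis
        using sub B by (intro mult_left_mono charge_nonneg) auto
    qed (simp add: charge_empty)
  qed
  also have "\<dots> = upper_sum \<mu> Q f"
    unfolding upper_sum_def using charge_split_partition[OF P] sub
    by (subst sum.swap) (simp add: sum_distrib_right Int_commute)
  finally show ?thesis .
qed

lemma charge_integral_lower_sums:
  "charge_integral I \<mu> f = (SUP P\<in>{P. finite P \<and> partition_on I P}. lower_sum \<mu> P f)"
  unfolding charge_integral_def lower_sum_def by (simp add: setcompr_eq_image)

lemma lower_sum_le_charge_integral: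
  assumes "bounded (f ` I)" "partition_on I P" "finite P"
  shows "lower_sum \<mu> P f \<le> charge_integral I \<mu> f"
  unfolding charge_integral_lower_sums
proof (rule cSUP_upper)
  show "bdd_above ((\<lambda>P. lower_sum \<mu> P f) ` {P. finite P \<and> partition_on I P})"
    using lower_sum_le_upper_sum[OF assms(1) _ _ partition_on_space[OF space_nonempty]]
    by (auto simp: bdd_above_def)
qed (use assms in auto)

lemma charge_integral_le_upper_sum:
  assumes "bounded (f ` I)" "partition_on I P" "finite P"
  shows "charge_integral I \<mu> f \<le> upper_sum \<mu> P f"
  unfolding charge_integral_lower_sums
  using lower_sum_le_upper_sum[OF assms(1) _ _ assms(2,3)] partition_on_space[OF space_nonempty]
  by (intro cSUP_least) auto

lemma abs_charge_integral_riemann_sum_le: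
  assumes f: "bounded (f ` I)" and P: "partition_on I P" "finite P"
    and osc: "\<forall>A\<in>P. \<forall>i\<in>A. \<forall>j\<in>A. \<bar>f i - f j\<bar> \<le> \<epsilon>"
  shows "\<bar>charge_integral I \<mu> f - riemann_sum \<mu> P f\<bar> \<le> \<epsilon>"
proof -
  define s where "s A = (SOME i. i \<in> A)" for A :: "'i set"
  have sub: "A \<subseteq> I" and s: "s A \<in> A" if "A \<in> P" for A
    using that partition_onD1[OF P(1)] partition_onD3[OF P(1)] unfolding s_def
    by (auto simp: some_in_eq)
  have R_shift: "riemann_sum \<mu> P f + c = (\<Sum>A\<in>P. \<mu> A * (f (s A) + c))" for c
    unfolding riemann_sum_def s_def
    using sum_charge_partition[OF P] by (simp add: distrib_left sum.distrib sum_distrib_right[symmetric])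
  have "riemann_sum \<mu> P f + - \<epsilon> \<le> lower_sum \<mu> P f"
    unfolding R_shift lower_sum_def
  proof (intro sum_mono mult_left_mono)
    fix A assume A: "A \<in> P"
    have "f (s A) + - \<epsilon> \<le> f i" if "i \<in> A" for i
      using osc A s[OF A] that by fastforce
    then show "f (s A) + - \<epsilon> \<le> (INF i\<in>A. f i)"
      using A s by (intro cINF_greatest) auto
  qed (simp add: charge_nonneg sub)
  moreover have "upper_sum \<mu> P f \<le> riemann_sum \<mu> P f + \<epsilon>"
    unfolding R_shift upper_sum_def
  proof (intro sum_mono mult_left_mono)
    fix A assume A: "A \<in> P"
    have "f i \<le> f (s A) + \<epsilon>" if "i \<in> A" for i
      using osc A s[OF A] that by fastforce
    then show "(SUP i\<in>A. f i) \<le> f (s A) + \<epsilon>"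
      using A s by (intro cSUP_least) auto
  qed (simp add: charge_nonneg sub)
  ultimately show ?thesis
    using lower_sum_le_charge_integral[OF f P] charge_integral_le_upper_sum[OF f P] by linarith
qed

lemma exists_partition_small_oscillation:
  fixes f g :: "'i \<Rightarrow> real"
  assumes "bounded (f ` I)" "bounded (g ` I)" "\<epsilon> > 0"
  obtains P where "partition_on I P" "finite P"
    "\<forall>A\<in>P. \<forall>i\<in>A. \<forall>j\<in>A. \<bar>f i - f j\<bar> \<le> \<epsilon>"
    "\<forall>A\<in>P. \<forall>i\<in>A. \<forall>j\<in>A. \<bar>g i - g j\<bar> \<le> \<epsilon>"
proof
  define h where "h i = (\<lfloor>f i / \<epsilon>\<rfloor>, \<lfloor>g i / \<epsilon>\<rfloor>)" for i
  define P where "P = (\<lambda>k. {i \<in> I. h i = k}) ` h ` I"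
  show "partition_on I P"
    unfolding P_def by (rule partition_on_fibers)
  have "h ` I \<subseteq> (\<lambda>i. \<lfloor>f i / \<epsilon>\<rfloor>) ` I \<times> (\<lambda>i. \<lfloor>g i / \<epsilon>\<rfloor>) ` I"
    unfolding h_def by auto
  then have "finite (h ` I)"
    using finite_floor_image[OF assms(1,3)] finite_floor_image[OF assms(2,3)]
    by (rule finite_subset[OF _ finite_cartesian_product])
  then show "finite P"
    unfolding P_def by simp
  have "\<bar>f i - f j\<bar> \<le> \<epsilon> \<and> \<bar>g i - g j\<bar> \<le> \<epsilon>" if "A \<in> P" "i \<in> A" "j \<in> A" for A i j
  proof -
    have "h i = h j"
      using that unfolding P_def by auto
    then show ?thesis
      unfolding h_def using abs_diff_less_if_floor_eq[OF _ assms(3)] by (auto intro: less_imp_le)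
  qed
  then show "\<forall>A\<in>P. \<forall>i\<in>A. \<forall>j\<in>A. \<bar>f i - f j\<bar> \<le> \<epsilon>"
    "\<forall>A\<in>P. \<forall>i\<in>A. \<forall>j\<in>A. \<bar>g i - g j\<bar> \<le> \<epsilon>"
    by blast+
qed

lemma charge_integral_cong:
  assumes "\<And>i. i \<in> I \<Longrightarrow> f i = g i"
  shows "charge_integral I \<mu> f = charge_integral I \<mu> g"
proof -
  have "lower_sum \<mu> P f = lower_sum \<mu> P g" if "partition_on I P" for P
    unfolding lower_sum_def using assms partition_onD1[OF that]
    by (intro sum.cong refl arg_cong2[where f = "(*)"] INF_cong) auto
  then show ?thesis
    unfolding charge_integral_lower_sums by (intro SUP_cong) auto
qed

lemma charge_integral_const [simp]: "charge_integral I \<mu> (\<lambda>i. c) = c"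
proof -
  have "\<bar>charge_integral I \<mu> (\<lambda>i. c) - riemann_sum \<mu> {I} (\<lambda>i. c)\<bar> \<le> 0"
    by (rule abs_charge_integral_riemann_sum_le[OF bounded_const_image
          partition_on_space[OF space_nonempty]]) auto
  then show ?thesis
    by (simp add: riemann_sum_def charge_space)
qed

lemma charge_integral_nonneg:
  assumes "bounded (f ` I)" "\<And>i. i \<in> I \<Longrightarrow> 0 \<le> f i"
  shows "0 \<le> charge_integral I \<mu> f"
proof -
  have "0 \<le> (INF i\<in>I. f i)"
    using assms(2) space_nonempty by (intro cINF_greatest) auto
  then have "0 \<le> lower_sum \<mu> {I} f"
    by (simp add: lower_sum_def charge_space)
  also have "\<dots> \<le> charge_integral I \<mu> f"
    using lower_sum_le_charge_integral[OF assms(1) partition_on_space[OF space_nonempty]] by simp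
  finally show ?thesis .
qed

lemma charge_integral_add:
  assumes f: "bounded (f ` I)" and g: "bounded (g ` I)"
  shows "charge_integral I \<mu> (\<lambda>i. f i + g i) = charge_integral I \<mu> f + charge_integral I \<mu> g"
proof (rule real_eq_if_abs_diff_le_multiple)
  fix \<epsilon> :: real assume "\<epsilon> > 0"
  then obtain P where P: "partition_on I P" "finite P"
    and osc: "\<forall>A\<in>P. \<forall>i\<in>A. \<forall>j\<in>A. \<bar>f i - f j\<bar> \<le> \<epsilon>"
      "\<forall>A\<in>P. \<forall>i\<in>A. \<forall>j\<in>A. \<bar>g i - g j\<bar> \<le> \<epsilon>"
    by (rule exists_partition_small_oscillation[OF f g])
  have "\<forall>A\<in>P. \<forall>i\<in>A. \<forall>j\<in>A. \<bar>(f i + g i) - (f j + g j)\<bar> \<le> 2 * \<epsilon>"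
    (is "\<forall>A\<in>P. \<forall>i\<in>A. \<forall>j\<in>A. ?osc_sum A i j")
  proof (intro ballI)
    fix A i j assume "A \<in> P" "i \<in> A" "j \<in> A"
    then have "\<bar>f i - f j\<bar> \<le> \<epsilon>" "\<bar>g i - g j\<bar> \<le> \<epsilon>"
      using osc by blast+
    then show "?osc_sum A i j"
      by linarith
  qed
  from abs_charge_integral_riemann_sum_le[OF bounded_plus_comp[OF f g] P this]
    abs_charge_integral_riemann_sum_le[OF f P osc(1)] abs_charge_integral_riemann_sum_le[OF g P osc(2)]
  have "\<bar>charge_integral I \<mu> (\<lambda>i. f i + g i) - riemann_sum \<mu> P (\<lambda>i. f i + g i)\<bar> \<le> 2 * \<epsilon>"
    "\<bar>charge_integral I \<mu> f - riemann_sum \<mu> P f\<bar> \<le> \<epsilon>"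
    "\<bar>charge_integral I \<mu> g - riemann_sum \<mu> P g\<bar> \<le> \<epsilon>" .
  moreover have "riemann_sum \<mu> P (\<lambda>i. f i + g i) = riemann_sum \<mu> P f + riemann_sum \<mu> P g"
    by (simp add: riemann_sum_def distrib_left sum.distrib)
  ultimately show "\<bar>charge_integral I \<mu> (\<lambda>i. f i + g i) - (charge_integral I \<mu> f + charge_integral I \<mu> g)\<bar> \<le> 4 * \<epsilon>"
    by linarith
qed

lemma charge_integral_mult_left:
  assumes f: "bounded (f ` I)"
  shows "charge_integral I \<mu> (\<lambda>i. r * f i) = r * charge_integral I \<mu> f"
proof (rule real_eq_if_abs_diff_le_multiple)
  fix \<epsilon> :: real assume "\<epsilon> > 0"
  then obtain P where P: "partition_on I P" "finite P"
    and osc: "\<forall>A\<in>P. \<forall>i\<in>A. \<forall>j\<in>A. \<bar>f i - f j\<bar> \<le> \<epsilon>"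
    by (rule exists_partition_small_oscillation[OF f f])
  have rf: "bounded ((\<lambda>i. r * f i) ` I)"
    using bounded_scaleR_comp[OF f, of r] by simp
  have "\<forall>A\<in>P. \<forall>i\<in>A. \<forall>j\<in>A. \<bar>r * f i - r * f j\<bar> \<le> \<bar>r\<bar> * \<epsilon>"
    using osc by (simp add: right_diff_distrib[symmetric] abs_mult mult_left_mono)
  from abs_charge_integral_riemann_sum_le[OF rf P this]
  have "\<bar>charge_integral I \<mu> (\<lambda>i. r * f i) - riemann_sum \<mu> P (\<lambda>i. r * f i)\<bar> \<le> \<bar>r\<bar> * \<epsilon>" .
  moreover have "riemann_sum \<mu> P (\<lambda>i. r * f i) = r * riemann_sum \<mu> P f"
    by (simp add: riemann_sum_def sum_distrib_left ac_simps)
  moreover have "\<bar>r * charge_integral I \<mu> f - r * riemann_sum \<mu> P f\<bar> \<le> \<bar>r\<bar> * \<epsilon>"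
    using abs_charge_integral_riemann_sum_le[OF f P osc]
    by (simp add: right_diff_distrib[symmetric] abs_mult mult_left_mono)
  ultimately show "\<bar>charge_integral I \<mu> (\<lambda>i. r * f i) - r * charge_integral I \<mu> f\<bar> \<le> (2 * \<bar>r\<bar>) * \<epsilon>"
    by linarith
qed

lemma charge_integral_uminus:
  "bounded (f ` I) \<Longrightarrow> charge_integral I \<mu> (\<lambda>i. - f i) = - charge_integral I \<mu> f"
  using charge_integral_mult_left[of f "-1"] by simp

lemma charge_integral_diff:
  assumes "bounded (f ` I)" "bounded (g ` I)"
  shows "charge_integral I \<mu> (\<lambda>i. f i - g i) = charge_integral I \<mu> f - charge_integral I \<mu> g"
  using charge_integral_add[OF assms(1) uminus_bounded_comp[THEN iffD2, OF assms(2)]]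
    charge_integral_uminus[OF assms(2)] by simp

lemma charge_integral_mono:
  assumes "bounded (f ` I)" "bounded (g ` I)" "\<And>i. i \<in> I \<Longrightarrow> f i \<le> g i"
  shows "charge_integral I \<mu> f \<le> charge_integral I \<mu> g"
  using charge_integral_nonneg[OF bounded_minus_comp[OF assms(2,1)]] assms(3)
    charge_integral_diff[OF assms(2,1)] by simp

lemma charge_integral_eq_if_abs_diff_le_null:
  assumes "bounded (f ` I)" "bounded (g ` I)" "bounded (d ` I)"
    and "\<And>i. i \<in> I \<Longrightarrow> \<bar>f i - g i\<bar> \<le> d i" "charge_integral I \<mu> d = 0"
  shows "charge_integral I \<mu> f = charge_integral I \<mu> g"
proof -
  have "charge_integral I \<mu> (\<lambda>i. f i - g i) \<le> charge_integral I \<mu> d"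
    using abs_le_D1[OF assms(4)] by (intro charge_integral_mono bounded_minus_comp assms(1-3))
  moreover have "charge_integral I \<mu> (\<lambda>i. g i - f i) \<le> charge_integral I \<mu> d"
    using abs_le_D2[OF assms(4)] by (intro charge_integral_mono bounded_minus_comp assms(1-3)) auto
  ultimately show ?thesis
    using charge_integral_diff[OF assms(1,2)] charge_integral_diff[OF assms(2,1)] assms(5)
    by linarith
qed

lemma charge_integral_SUP:
  fixes h :: "'i \<Rightarrow> 'b \<Rightarrow> real"
  assumes C: "\<And>i. i \<in> I \<Longrightarrow> C i \<noteq> {}"
    and h: "\<And>i c. i \<in> I \<Longrightarrow> c \<in> C i \<Longrightarrow> \<bar>h i c\<bar> \<le> B"
  shows "(SUP b\<in>Pi\<^sub>E I C. charge_integral I \<mu> (\<lambda>i. h i (b i)))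
    = charge_integral I \<mu> (\<lambda>i. SUP c\<in>C i. h i c)"
proof -
  define F where "F i = (SUP c\<in>C i. h i c)" for i
  have bdd: "bdd_above (h i ` C i)" if "i \<in> I" for i
    using abs_le_D1[OF h[OF that]] by (rule bdd_aboveI2)
  have F: "bounded (F ` I)"
    unfolding F_def using C h by (rule bounded_SUP_image)
  have hb: "bounded ((\<lambda>i. h i (b i)) ` I)" if "b \<in> Pi\<^sub>E I C" for b
    unfolding bounded_real using h that by (auto simp: PiE_iff)
  have le_F: "charge_integral I \<mu> (\<lambda>i. h i (b i)) \<le> charge_integral I \<mu> F" if "b \<in> Pi\<^sub>E I C" for b
  proof (rule charge_integral_mono[OF hb[OF that] F])
    fix i assume "i \<in> I"
    then show "h i (b i) \<le> F i"
      unfolding F_def using that bdd by (auto intro!: cSUP_upper simp: PiE_iff)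
  qed
  show ?thesis
    unfolding F_def[symmetric]
  proof (rule antisym)
    show "(SUP b\<in>Pi\<^sub>E I C. charge_integral I \<mu> (\<lambda>i. h i (b i))) \<le> charge_integral I \<mu> F"
      using le_F C by (intro cSUP_least) (auto simp: PiE_eq_empty_iff)
    show "charge_integral I \<mu> F \<le> (SUP b\<in>Pi\<^sub>E I C. charge_integral I \<mu> (\<lambda>i. h i (b i)))"
    proof (rule field_le_epsilon)
      fix \<epsilon> :: real assume "\<epsilon> > 0"
      \<comment> \<open>The \<open>\<epsilon>\<close>-maximisers are chosen coordinatewise; this needs no measurability,
        since the charge is defined on all subsets of \<open>I\<close>.\<close>
      have "\<exists>c. c \<in> C i \<and> F i - \<epsilon> < h i c" if "i \<in> I" for i
        using less_cSUP_iff[OF C[OF that] bdd[OF that], of "F i - \<epsilon>"] \<open>\<epsilon> > 0\<close>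
        unfolding F_def by auto
      then obtain b where b: "\<And>i. i \<in> I \<Longrightarrow> b i \<in> C i \<and> F i - \<epsilon> < h i (b i)"
        by (metis bchoice[rule_format])
      then have b_in: "restrict b I \<in> Pi\<^sub>E I C"
        by simp
      have "charge_integral I \<mu> F - \<epsilon> = charge_integral I \<mu> (\<lambda>i. F i - \<epsilon>)"
        using charge_integral_diff[OF F bounded_const_image] by simp
      also have "\<dots> \<le> charge_integral I \<mu> (\<lambda>i. h i (restrict b I i))"
        using b by (intro charge_integral_mono bounded_minus_comp F bounded_const_image hb[OF b_in])
          (auto intro: less_imp_le)
      also have "\<dots> \<le> (SUP b\<in>Pi\<^sub>E I C. charge_integral I \<mu> (\<lambda>i. h i (b i)))"
        using le_F b_in by (intro cSUP_upper bdd_aboveI2) auto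
      finally show "charge_integral I \<mu> F \<le> (SUP b\<in>Pi\<^sub>E I C. charge_integral I \<mu> (\<lambda>i. h i (b i))) + \<epsilon>"
        by simp
    qed
  qed
qed

lemma charge_integral_INF:
  fixes h :: "'i \<Rightarrow> 'b \<Rightarrow> real"
  assumes C: "\<And>i. i \<in> I \<Longrightarrow> C i \<noteq> {}"
    and h: "\<And>i c. i \<in> I \<Longrightarrow> c \<in> C i \<Longrightarrow> \<bar>h i c\<bar> \<le> B"
  shows "(INF b\<in>Pi\<^sub>E I C. charge_integral I \<mu> (\<lambda>i. h i (b i)))
    = charge_integral I \<mu> (\<lambda>i. INF c\<in>C i. h i c)"
proof -
  have hb: "bounded ((\<lambda>i. h i (b i)) ` I)" if "b \<in> Pi\<^sub>E I C" for b
    unfolding bounded_real using h that by (auto simp: PiE_iff)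
  have h': "\<bar>- h i c\<bar> \<le> B" if "i \<in> I" "c \<in> C i" for i c
    using h[OF that] by simp
  have "(INF b\<in>Pi\<^sub>E I C. charge_integral I \<mu> (\<lambda>i. h i (b i)))
      = - (SUP b\<in>Pi\<^sub>E I C. charge_integral I \<mu> (\<lambda>i. - h i (b i)))"
    unfolding Inf_real_def image_image using charge_integral_uminus[OF hb]
    by (simp cong: SUP_cong)
  also have "\<dots> = - charge_integral I \<mu> (\<lambda>i. SUP c\<in>C i. - h i c)"
    using charge_integral_SUP[OF C h'] by simp
  also have "\<dots> = charge_integral I \<mu> (\<lambda>i. INF c\<in>C i. h i c)"
    using charge_integral_uminus[OF bounded_SUP_image[OF C h']]
    by (simp add: Inf_real_def image_image)
  finally show ?thesis .
qed

end

section \<open>Values of formulas in a single structure\<close>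

fun afml_bound :: "('c, 'f, 'r) afml \<Rightarrow> real" where
  "afml_bound One = 1"
| "afml_bound (Dist t u) = 1"
| "afml_bound (Rel R ts) = 1"
| "afml_bound (Add \<phi> \<psi>) = afml_bound \<phi> + afml_bound \<psi>"
| "afml_bound (Scale r \<phi>) = \<bar>r\<bar> * afml_bound \<phi>"
| "afml_bound (FSup x \<phi>) = afml_bound \<phi>"
| "afml_bound (FInf x \<phi>) = afml_bound \<phi>"

lemma list_dist_map:
  "list_dist d (map f xs) (map g xs) = (\<Sum>x\<leftarrow>xs. d (f x) (g x))"
  by (induction xs) (auto simp: list_dist_def)

context
  fixes L :: "('f, 'r) lang" and M :: "('a, 'c, 'f, 'r) lstruct"
  assumes M: "is_Lstructure L M"
begin

lemma Lstructure_Metric_space: "Metric_space (carrier M) (sdist M)"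
  and Lstructure_carrier_nonempty: "carrier M \<noteq> {}"
  and Lstructure_dist_le_1: "x \<in> carrier M \<Longrightarrow> y \<in> carrier M \<Longrightarrow> sdist M x y \<le> 1"
  and Lstructure_cinterp: "cinterp M c \<in> carrier M"
  using M unfolding is_Lstructure_def by auto

lemma Lstructure_finterp:
  "length xs = farity L F \<Longrightarrow> set xs \<subseteq> carrier M \<Longrightarrow> finterp M F xs \<in> carrier M"
  using M unfolding is_Lstructure_def by blast

lemma Lstructure_finterp_lipschitz:
  "length xs = farity L F \<Longrightarrow> length ys = farity L F \<Longrightarrow>
    set xs \<subseteq> carrier M \<Longrightarrow> set ys \<subseteq> carrier M \<Longrightarrow>
    sdist M (finterp M F xs) (finterp M F ys) \<le> flip L F * list_dist (sdist M) xs ys"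
  using M unfolding is_Lstructure_def by blast

lemma Lstructure_rinterp_bounds:
  "length xs = rarity L R \<Longrightarrow> set xs \<subseteq> carrier M \<Longrightarrow>
    0 \<le> rinterp M R xs \<and> rinterp M R xs \<le> 1"
  using M unfolding is_Lstructure_def by blast

lemma Lstructure_rinterp_lipschitz:
  "length xs = rarity L R \<Longrightarrow> length ys = rarity L R \<Longrightarrow>
    set xs \<subseteq> carrier M \<Longrightarrow> set ys \<subseteq> carrier M \<Longrightarrow>
    rinterp M R xs - rinterp M R ys \<le> rlip L R * list_dist (sdist M) xs ys"
  using M unfolding is_Lstructure_def by blast

lemma eval_trm_in_carrier:
  "wf_trm L t \<Longrightarrow> (\<And>k. asg k \<in> carrier M) \<Longrightarrow> eval_trm M asg t \<in> carrier M"
  by (induction t) (auto intro!: Lstructure_finterp Lstructure_cinterp)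

lemma abs_eval_fml_le:
  "wf_fml L \<phi> \<Longrightarrow> (\<And>k. asg k \<in> carrier M) \<Longrightarrow> \<bar>eval_fml M asg \<phi>\<bar> \<le> afml_bound \<phi>"
proof (induction \<phi> arbitrary: asg)
  case (Dist t u)
  then have "eval_trm M asg t \<in> carrier M" "eval_trm M asg u \<in> carrier M"
    by (auto intro: eval_trm_in_carrier)
  then show ?case
    using Metric_space.nonneg[OF Lstructure_Metric_space] Lstructure_dist_le_1 by simp
next
  case (Rel R ts)
  then have "set (map (eval_trm M asg) ts) \<subseteq> carrier M"
    by (auto intro: eval_trm_in_carrier)
  then show ?case
    using Lstructure_rinterp_bounds[of "map (eval_trm M asg) ts" R] Rel.prems(1) by simp
next
  case (Add \<phi> \<psi>)
  then have "\<bar>eval_fml M asg \<phi>\<bar> \<le> afml_bound \<phi>" "\<bar>eval_fml M asg \<psi>\<bar> \<le> afml_bound \<psi>"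
    by simp_all
  then show ?case
    by simp
next
  case (Scale r \<phi>)
  then show ?case
    by (simp add: abs_mult mult_left_mono)
next
  case (FSup x \<phi>)
  have "\<bar>eval_fml M (asg(x := b)) \<phi>\<bar> \<le> afml_bound \<phi>" if "b \<in> carrier M" for b
    using FSup that by simp
  then show ?case
    using Lstructure_carrier_nonempty by (simp only: eval_fml.simps afml_bound.simps) (rule cSup_abs_le; auto)
next
  case (FInf x \<phi>)
  have "\<bar>eval_fml M (asg(x := b)) \<phi>\<bar> \<le> afml_bound \<phi>" if "b \<in> carrier M" for b
    using FInf that by simp
  then show ?case
    using Lstructure_carrier_nonempty
    by (simp only: eval_fml.simps afml_bound.simps Inf_real_def image_image abs_minus_cancel)
      (rule cSup_abs_le; auto)
qed simp

end

section \<open>Los's theorem for ultrameans\<close>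

locale ultramean_setting = ultracharge_space I \<mu> for I :: "'i set" and \<mu> +
  fixes L :: "('f, 'r) lang" and Ms :: "'i \<Rightarrow> ('a, 'c, 'f, 'r) lstruct"
  assumes structures: "\<And>i. i \<in> I \<Longrightarrow> is_Lstructure L (Ms i)"
begin

abbreviation product :: "('i \<Rightarrow> 'a) set" where
  "product \<equiv> \<Pi>\<^sub>E i\<in>I. carrier (Ms i)"

abbreviation cls :: "('i \<Rightarrow> 'a) \<Rightarrow> ('i \<Rightarrow> 'a) set" where
  "cls \<equiv> um_class I \<mu> Ms"

abbreviation pdist :: "('i \<Rightarrow> 'a) \<Rightarrow> ('i \<Rightarrow> 'a) \<Rightarrow> real" where
  "pdist \<equiv> um_pdist I \<mu> Ms"

abbreviation ultra :: "(('i \<Rightarrow> 'a) set, 'c, 'f, 'r) lstruct" where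
  "ultra \<equiv> ultramean I \<mu> Ms"

lemma Metric_space_Ms: "i \<in> I \<Longrightarrow> Metric_space (carrier (Ms i)) (sdist (Ms i))"
  using Lstructure_Metric_space[OF structures] .

lemma bounded_dist_image:
  assumes "a \<in> product" "b \<in> product"
  shows "bounded ((\<lambda>i. sdist (Ms i) (a i) (b i)) ` I)"
  unfolding bounded_real
  using assms Lstructure_dist_le_1[OF structures] Metric_space.nonneg[OF Metric_space_Ms]
  by (intro exI[of _ 1]) (auto simp: PiE_iff)

lemma um_pdist_nonneg: "a \<in> product \<Longrightarrow> b \<in> product \<Longrightarrow> 0 \<le> pdist a b"
  unfolding um_pdist_def using Metric_space.nonneg[OF Metric_space_Ms]
  by (intro charge_integral_nonneg bounded_dist_image) auto

lemma um_pdist_self: "a \<in> product \<Longrightarrow> pdist a a = 0"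
  unfolding um_pdist_def using Metric_space.mdist_zero[OF Metric_space_Ms]
  by (subst charge_integral_cong[where g = "\<lambda>i. 0"]) (auto simp: PiE_iff)

lemma um_pdist_commute: "a \<in> product \<Longrightarrow> b \<in> product \<Longrightarrow> pdist a b = pdist b a"
  unfolding um_pdist_def using Metric_space.commute[OF Metric_space_Ms]
  by (intro charge_integral_cong) (auto simp: PiE_iff)

lemma um_pdist_triangle:
  assumes "a \<in> product" "b \<in> product" "c \<in> product"
  shows "pdist a c \<le> pdist a b + pdist b c"
  unfolding um_pdist_def
    charge_integral_add[OF bounded_dist_image[OF assms(1,2)] bounded_dist_image[OF assms(2,3)], symmetric]
  using assms Metric_space.triangle[OF Metric_space_Ms]
  by (intro charge_integral_mono bounded_dist_image bounded_plus_comp) (auto simp: PiE_iff)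

lemma um_class_eqI:
  assumes "a \<in> product" "b \<in> product" "pdist a b = 0"
  shows "cls a = cls b"
proof -
  have "pdist a c = 0 \<longleftrightarrow> pdist b c = 0" if "c \<in> product" for c
    using um_pdist_triangle[OF assms(1,2) that] um_pdist_triangle[OF assms(2,1) that]
      um_pdist_commute[OF assms(1,2)] um_pdist_nonneg[OF assms(1) that] um_pdist_nonneg[OF assms(2) that]
      assms(3) by linarith
  then show ?thesis
    unfolding um_class_def by blast
qed

lemma um_rep_class:
  assumes "a \<in> product"
  shows "um_rep (cls a) \<in> product" "pdist a (um_rep (cls a)) = 0"
proof -
  have "a \<in> cls a"
    using assms um_pdist_self unfolding um_class_def by simp
  then have "um_rep (cls a) \<in> cls a"
    unfolding um_rep_def by (rule someI[of "\<lambda>x. x \<in> cls a"])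
  then show "um_rep (cls a) \<in> product" "pdist a (um_rep (cls a)) = 0"
    unfolding um_class_def by auto
qed

lemma um_pdist_rep:
  assumes "a \<in> product" "b \<in> product"
  shows "pdist (um_rep (cls a)) (um_rep (cls b)) = pdist a b"
proof -
  note ra = um_rep_class[OF assms(1)] and rb = um_rep_class[OF assms(2)]
  show ?thesis
    using um_pdist_triangle[OF ra(1) assms(1) rb(1)] um_pdist_triangle[OF assms(1,2) rb(1)]
      um_pdist_triangle[OF assms(1) ra(1) assms(2)] um_pdist_triangle[OF ra(1) rb(1) assms(2)]
      um_pdist_commute[OF assms(1) ra(1)] um_pdist_commute[OF assms(2) rb(1)] ra(2) rb(2)
    by linarith
qed

lemma bounded_sum_dist_rep:
  "set xs \<subseteq> product \<Longrightarrow> bounded ((\<lambda>i. \<Sum>x\<leftarrow>xs. sdist (Ms i) (x i) (um_rep (cls x) i)) ` I)"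
  by (induction xs) (auto intro!: bounded_plus_comp bounded_dist_image um_rep_class bounded_const_image)

lemma charge_integral_sum_dist_rep:
  "set xs \<subseteq> product \<Longrightarrow> charge_integral I \<mu> (\<lambda>i. \<Sum>x\<leftarrow>xs. sdist (Ms i) (x i) (um_rep (cls x) i)) = 0"
proof (induction xs)
  case (Cons x xs)
  then have "x \<in> product" "set xs \<subseteq> product"
    by auto
  with Cons.IH show ?case
    using charge_integral_add[OF bounded_dist_image[OF _ um_rep_class(1)] bounded_sum_dist_rep]
      um_rep_class(2)[of x] by (simp add: um_pdist_def)
qed simp

lemma ultramean_finterp:
  assumes xs: "set xs \<subseteq> product" and len: "length xs = farity L F"
  shows "finterp ultra F (map cls xs) = cls (\<lambda>i\<in>I. finterp (Ms i) F (map (\<lambda>x. x i) xs))"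
proof -
  define Fx where "Fx = (\<lambda>i\<in>I. finterp (Ms i) F (map (\<lambda>x. x i) xs))"
  define Fr where "Fr = (\<lambda>i\<in>I. finterp (Ms i) F (map (\<lambda>x. um_rep (cls x) i) xs))"
  have car: "x i \<in> carrier (Ms i)" "um_rep (cls x) i \<in> carrier (Ms i)" if "x \<in> set xs" "i \<in> I" for x i
    using that xs um_rep_class(1)[of x] by (auto simp: PiE_iff)
  have in_product: "Fx \<in> product" "Fr \<in> product"
    unfolding Fx_def Fr_def using car len by (auto intro!: Lstructure_finterp[OF structures])
  have "pdist Fx Fr
      \<le> charge_integral I \<mu> (\<lambda>i. flip L F * (\<Sum>x\<leftarrow>xs. sdist (Ms i) (x i) (um_rep (cls x) i)))"
    unfolding um_pdist_def
  proof (rule charge_integral_mono[OF bounded_dist_image[OF in_product]])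
    show "bounded ((\<lambda>i. flip L F * (\<Sum>x\<leftarrow>xs. sdist (Ms i) (x i) (um_rep (cls x) i))) ` I)"
      using bounded_scaleR_comp[OF bounded_sum_dist_rep[OF xs]] by simp
    fix i assume i: "i \<in> I"
    have "sdist (Ms i) (finterp (Ms i) F (map (\<lambda>x. x i) xs)) (finterp (Ms i) F (map (\<lambda>x. um_rep (cls x) i) xs))
        \<le> flip L F * list_dist (sdist (Ms i)) (map (\<lambda>x. x i) xs) (map (\<lambda>x. um_rep (cls x) i) xs)"
      by (rule Lstructure_finterp_lipschitz[OF structures[OF i]]) (use car i len in auto)
    then show "sdist (Ms i) (Fx i) (Fr i)
        \<le> flip L F * (\<Sum>x\<leftarrow>xs. sdist (Ms i) (x i) (um_rep (cls x) i))"
      unfolding Fx_def Fr_def list_dist_map using i by simp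
  qed
  also have "\<dots> = 0"
    using charge_integral_mult_left[OF bounded_sum_dist_rep[OF xs]] charge_integral_sum_dist_rep[OF xs]
    by simp
  finally have "cls Fx = cls Fr"
    using um_pdist_nonneg[OF in_product] by (intro um_class_eqI in_product) simp
  then show ?thesis
    unfolding Fx_def Fr_def by (simp add: ultramean_def o_def)
qed

lemma ultramean_rinterp:
  assumes xs: "set xs \<subseteq> product" and len: "length xs = rarity L R"
  shows "rinterp ultra R (map cls xs) = charge_integral I \<mu> (\<lambda>i. rinterp (Ms i) R (map (\<lambda>x. x i) xs))"
proof -
  define d where "d i = rlip L R * (\<Sum>x\<leftarrow>xs. sdist (Ms i) (x i) (um_rep (cls x) i))" for i
  have car: "set (map (\<lambda>x. x i) xs) \<subseteq> carrier (Ms i)"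
    "set (map (\<lambda>x. um_rep (cls x) i) xs) \<subseteq> carrier (Ms i)" if "i \<in> I" for i
    using that xs um_rep_class(1) by (auto simp: PiE_iff)
  have bounded_rinterp: "bounded ((\<lambda>i. rinterp (Ms i) R (map (\<lambda>x. y x i) xs)) ` I)"
    if "\<And>i. i \<in> I \<Longrightarrow> set (map (\<lambda>x. y x i) xs) \<subseteq> carrier (Ms i)" for y
    unfolding bounded_real using that len Lstructure_rinterp_bounds[OF structures]
    by (intro exI[of _ 1]) fastforce
  have "rinterp ultra R (map cls xs)
      = charge_integral I \<mu> (\<lambda>i. rinterp (Ms i) R (map (\<lambda>x. um_rep (cls x) i) xs))"
    by (simp add: ultramean_def o_def)
  also have "\<dots> = charge_integral I \<mu> (\<lambda>i. rinterp (Ms i) R (map (\<lambda>x. x i) xs))"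
  proof (rule charge_integral_eq_if_abs_diff_le_null)
    show "bounded (d ` I)"
      unfolding d_def using bounded_scaleR_comp[OF bounded_sum_dist_rep[OF xs]] by simp
    show "charge_integral I \<mu> d = 0"
      unfolding d_def using charge_integral_mult_left[OF bounded_sum_dist_rep[OF xs]]
        charge_integral_sum_dist_rep[OF xs] by simp
    fix i assume i: "i \<in> I"
    have comm: "(\<Sum>x\<leftarrow>xs. sdist (Ms i) (um_rep (cls x) i) (x i))
        = (\<Sum>x\<leftarrow>xs. sdist (Ms i) (x i) (um_rep (cls x) i))"
      using car[OF i] Metric_space.commute[OF Metric_space_Ms[OF i]]
      by (intro arg_cong[where f = sum_list] map_cong) auto
    have "rinterp (Ms i) R (map (\<lambda>x. um_rep (cls x) i) xs) - rinterp (Ms i) R (map (\<lambda>x. x i) xs)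
        \<le> rlip L R * list_dist (sdist (Ms i)) (map (\<lambda>x. um_rep (cls x) i) xs) (map (\<lambda>x. x i) xs)"
      "rinterp (Ms i) R (map (\<lambda>x. x i) xs) - rinterp (Ms i) R (map (\<lambda>x. um_rep (cls x) i) xs)
        \<le> rlip L R * list_dist (sdist (Ms i)) (map (\<lambda>x. x i) xs) (map (\<lambda>x. um_rep (cls x) i) xs)"
      by (rule Lstructure_rinterp_lipschitz[OF structures[OF i]]; use car[OF i] len in simp)+
    then show "\<bar>rinterp (Ms i) R (map (\<lambda>x. um_rep (cls x) i) xs) - rinterp (Ms i) R (map (\<lambda>x. x i) xs)\<bar>
        \<le> d i"
      unfolding d_def list_dist_map comm by linarith
  qed (rule bounded_rinterp; use car in blast)+
  finally show ?thesis .
qed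

lemma eval_trm_in_product:
  "(\<And>k. a k \<in> product) \<Longrightarrow> wf_trm L t \<Longrightarrow> (\<lambda>i\<in>I. eval_trm (Ms i) (\<lambda>k. a k i) t) \<in> product"
  by (auto intro!: eval_trm_in_carrier[OF structures] simp: PiE_iff)

lemma eval_trm_ultramean:
  assumes "\<And>k. a k \<in> product" "wf_trm L t"
  shows "eval_trm ultra (\<lambda>k. cls (a k)) t = cls (\<lambda>i\<in>I. eval_trm (Ms i) (\<lambda>k. a k i) t)"
  using assms(2)
proof (induction t)
  case (Var n)
  then show ?case
    using PiE_restrict[OF assms(1)] by simp
next
  case (Const c)
  then show ?case
    by (simp add: ultramean_def restrict_def)
next
  case (Fn F ts)
  define e where "e t = (\<lambda>i\<in>I. eval_trm (Ms i) (\<lambda>k. a k i) t)" for t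
  have e: "e t \<in> product" if "t \<in> set ts" for t
    unfolding e_def using Fn.prems that by (intro eval_trm_in_product[OF assms(1)]) auto
  have args: "map (eval_trm ultra (\<lambda>k. cls (a k))) ts = map cls (map e ts)"
    unfolding map_map
  proof (rule map_cong[OF refl])
    fix t assume "t \<in> set ts"
    then show "eval_trm ultra (\<lambda>k. cls (a k)) t = (cls \<circ> e) t"
      unfolding comp_def e_def by (rule Fn.IH) (use Fn.prems \<open>t \<in> set ts\<close> in auto)
  qed
  have "eval_trm ultra (\<lambda>k. cls (a k)) (Fn F ts) = finterp ultra F (map cls (map e ts))"
    unfolding eval_trm.simps args ..
  also have "\<dots> = cls (\<lambda>i\<in>I. finterp (Ms i) F (map (\<lambda>x. x i) (map e ts)))"
    using e Fn.prems by (intro ultramean_finterp) auto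
  also have "\<dots> = cls (\<lambda>i\<in>I. eval_trm (Ms i) (\<lambda>k. a k i) (Fn F ts))"
    by (intro arg_cong[where f = cls] restrict_ext) (simp add: e_def comp_def)
  finally show ?case .
qed

lemma bounded_eval_fml_image:
  assumes "\<And>k. a k \<in> product" "wf_fml L \<phi>"
  shows "bounded ((\<lambda>i. eval_fml (Ms i) (\<lambda>k. a k i) \<phi>) ` I)"
  unfolding bounded_real using assms
  by (intro exI[of _ "afml_bound \<phi>"]) (auto intro!: abs_eval_fml_le[OF structures] simp: PiE_iff)

lemma carrier_ultramean: "carrier ultra = cls ` product"
  by (simp add: ultramean_def)

lemma ultramean_sdist: "a \<in> product \<Longrightarrow> b \<in> product \<Longrightarrow> sdist ultra (cls a) (cls b) = pdist a b"
  using um_pdist_rep by (simp add: ultramean_def)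

lemma eval_fml_ultramean_Dist:
  assumes a: "\<And>k. a k \<in> product" and wf: "wf_fml L (Dist t u)"
  shows "eval_fml ultra (\<lambda>k. cls (a k)) (Dist t u)
    = charge_integral I \<mu> (\<lambda>i. eval_fml (Ms i) (\<lambda>k. a k i) (Dist t u))"
proof -
  define e where "e t = (\<lambda>i\<in>I. eval_trm (Ms i) (\<lambda>k. a k i) t)" for t
  have e: "e t \<in> product" "e u \<in> product"
    unfolding e_def using wf by (intro eval_trm_in_product[OF a]; simp)+
  have "eval_fml ultra (\<lambda>k. cls (a k)) (Dist t u) = sdist ultra (cls (e t)) (cls (e u))"
    using wf by (simp add: eval_trm_ultramean[OF a] e_def)
  also have "\<dots> = pdist (e t) (e u)"
    by (rule ultramean_sdist[OF e])
  also have "\<dots> = charge_integral I \<mu> (\<lambda>i. eval_fml (Ms i) (\<lambda>k. a k i) (Dist t u))"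
    unfolding um_pdist_def by (intro charge_integral_cong) (simp add: e_def)
  finally show ?thesis .
qed

lemma eval_fml_ultramean_Rel:
  assumes a: "\<And>k. a k \<in> product" and wf: "wf_fml L (Rel R ts)"
  shows "eval_fml ultra (\<lambda>k. cls (a k)) (Rel R ts)
    = charge_integral I \<mu> (\<lambda>i. eval_fml (Ms i) (\<lambda>k. a k i) (Rel R ts))"
proof -
  define e where "e t = (\<lambda>i\<in>I. eval_trm (Ms i) (\<lambda>k. a k i) t)" for t
  have e: "e t \<in> product" if "t \<in> set ts" for t
    unfolding e_def using wf that by (intro eval_trm_in_product[OF a]) auto
  have args: "map (eval_trm ultra (\<lambda>k. cls (a k))) ts = map cls (map e ts)"
    using wf by (auto simp: eval_trm_ultramean[OF a] e_def)
  have "eval_fml ultra (\<lambda>k. cls (a k)) (Rel R ts) = rinterp ultra R (map cls (map e ts))"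
    unfolding eval_fml.simps args ..
  also have "\<dots> = charge_integral I \<mu> (\<lambda>i. rinterp (Ms i) R (map (\<lambda>x. x i) (map e ts)))"
    using e wf by (intro ultramean_rinterp) auto
  also have "\<dots> = charge_integral I \<mu> (\<lambda>i. eval_fml (Ms i) (\<lambda>k. a k i) (Rel R ts))"
    by (intro charge_integral_cong) (simp add: e_def comp_def)
  finally show ?thesis .
qed

lemma eval_fml_ultramean_quantifiers:
  assumes IH: "\<And>a. (\<And>k. a k \<in> product) \<Longrightarrow>
      eval_fml ultra (\<lambda>k. cls (a k)) \<psi> = charge_integral I \<mu> (\<lambda>i. eval_fml (Ms i) (\<lambda>k. a k i) \<psi>)"
    and a: "\<And>k. a k \<in> product" and wf: "wf_fml L \<psi>"
  shows "eval_fml ultra (\<lambda>k. cls (a k)) (FSup x \<psi>)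
      = charge_integral I \<mu> (\<lambda>i. eval_fml (Ms i) (\<lambda>k. a k i) (FSup x \<psi>))"
    and "eval_fml ultra (\<lambda>k. cls (a k)) (FInf x \<psi>)
      = charge_integral I \<mu> (\<lambda>i. eval_fml (Ms i) (\<lambda>k. a k i) (FInf x \<psi>))"
proof -
  define h where "h i c = eval_fml (Ms i) ((\<lambda>k. a k i)(x := c)) \<psi>" for i c
  have image: "(\<lambda>B. eval_fml ultra ((\<lambda>k. cls (a k))(x := B)) \<psi>) ` carrier ultra
      = (\<lambda>b. charge_integral I \<mu> (\<lambda>i. h i (b i))) ` product"
    unfolding carrier_ultramean image_image
  proof (rule image_cong[OF refl])
    fix b assume b: "b \<in> product"
    have "(\<lambda>k. cls (a k))(x := cls b) = (\<lambda>k. cls ((a(x := b)) k))"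
      "\<And>i. (\<lambda>k. (a(x := b)) k i) = (\<lambda>k. a k i)(x := b i)"
      by (simp_all add: fun_eq_iff)
    then show "eval_fml ultra ((\<lambda>k. cls (a k))(x := cls b)) \<psi> = charge_integral I \<mu> (\<lambda>i. h i (b i))"
      unfolding h_def using IH[of "a(x := b)"] a b by simp
  qed
  have bound: "\<bar>h i c\<bar> \<le> afml_bound \<psi>" if "i \<in> I" "c \<in> carrier (Ms i)" for i c
    unfolding h_def using a wf that by (intro abs_eval_fml_le[OF structures]) (auto simp: PiE_iff)
  note nonempty = Lstructure_carrier_nonempty[OF structures]
  show "eval_fml ultra (\<lambda>k. cls (a k)) (FSup x \<psi>)
      = charge_integral I \<mu> (\<lambda>i. eval_fml (Ms i) (\<lambda>k. a k i) (FSup x \<psi>))"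
    using charge_integral_SUP[OF nonempty bound] image by (simp add: h_def)
  show "eval_fml ultra (\<lambda>k. cls (a k)) (FInf x \<psi>)
      = charge_integral I \<mu> (\<lambda>i. eval_fml (Ms i) (\<lambda>k. a k i) (FInf x \<psi>))"
    using charge_integral_INF[OF nonempty bound] image by (simp add: h_def)
qed

lemma eval_fml_ultramean:
  "(\<And>k. a k \<in> product) \<Longrightarrow> wf_fml L \<phi> \<Longrightarrow>
    eval_fml ultra (\<lambda>k. cls (a k)) \<phi> = charge_integral I \<mu> (\<lambda>i. eval_fml (Ms i) (\<lambda>k. a k i) \<phi>)"
proof (induction \<phi> arbitrary: a)
  case (Dist t u)
  then show ?case
    by (rule eval_fml_ultramean_Dist)
next
  case (Rel R ts)
  then show ?case
    by (rule eval_fml_ultramean_Rel)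
next
  case (Add \<phi> \<psi>)
  then show ?case
    by (simp add: charge_integral_add bounded_eval_fml_image)
next
  case (Scale r \<phi>)
  then show ?case
    by (simp add: charge_integral_mult_left bounded_eval_fml_image)
next
  case (FSup x \<psi>)
  then show ?case
    by (intro eval_fml_ultramean_quantifiers) auto
next
  case (FInf x \<psi>)
  then show ?case
    by (intro eval_fml_ultramean_quantifiers) auto
qed simp

end

theorem mainTheorem1:
  fixes L :: "('f, 'r) lang"
    and I :: "'i set" and \<mu> :: "'i set \<Rightarrow> real"
    and Ms :: "'i \<Rightarrow> ('a, 'c, 'f, 'r) lstruct"
    and \<phi> :: "('c, 'f, 'r) afml"
    and a :: "nat \<Rightarrow> 'i \<Rightarrow> 'a"
  assumes "lipschitz_language L"
    and "I \<noteq> {}"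
    and "ultracharge I \<mu>"
    and "\<forall>i\<in>I. is_Lstructure L (Ms i)"
    and "wf_fml L \<phi>"
    and "\<forall>k. a k \<in> (\<Pi>\<^sub>E i\<in>I. carrier (Ms i))"
  shows "eval_fml (ultramean I \<mu> Ms) (\<lambda>k. um_class I \<mu> Ms (a k)) \<phi>
           = charge_integral I \<mu> (\<lambda>i. eval_fml (Ms i) (\<lambda>k. a k i) \<phi>)"
proof -
  interpret ultramean_setting I \<mu> L Ms
    using assms(3,4) by unfold_locales auto
  show ?thesis
    using assms(5,6) by (intro eval_fml_ultramean) auto
qed

end
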